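(* Let $\varepsilon,\varepsilon',\delta$ be positive constants with $3\varepsilon+\varepsilon/\delta\le\varepsilon'$, and let $(V_1,V_2,V_3)$ be an $\varepsilon$-typical $(\varepsilon,p)$-regular triple in a graph, where the density $d_{ij}p$ of each pair $(V_i,V_j)$ is at least $\delta p$. Then at most $4\varepsilon d_{23}p|V_2||V_3|$ edges between $V_2$ and $V_3$ are not $\varepsilon'$-good.
   Context: For disjoint $X,Y$, $d(X,Y)=e(X,Y)/(|X||Y|)$; $x=(1\pm a)y$ means $x\in[(1-a)y,(1+a)y]$. A pair $(X,Y)$ is $(\varepsilon,p)$-regular if $|d(X,Y)-d(X',Y')|\le\varepsilon p$ for all $X'\subset X,Y'\subset Y$ with $|X'|\ge\varepsilon|X|,|Y'|\ge\varepsilon|Y|$; a triple is $(\varepsilon,p)$-regular if all three pairs are. Write $d(V_i,V_j)=d_{ij}p$. For $\{i,j,k\}=\{1,2,3\}$, $v\in V_i$ is $\varepsilon$-typical if with $N_j=N(v)\cap V_j$, $N_k=N(v)\cap V_k$: $|N_j|=(1\pm\varepsilon)d_{ij}p|V_j|$, $|N_k|=(1\pm\varepsilon)d_{ik}p|V_k|$, and there exist $N_j'\subset N_j,N_k'\subset N_k$ with $|N_j'|\ge(1-\varepsilon)|N_j|,|N_k'|\ge(1-\varepsilon)|N_k|$ such that $(N_j',N_k')$ is $(\varepsilon,p)$-regular of density $(1\pm\varepsilon)d_{jk}p$. The triple is $\varepsilon$-typical if it is $(\varepsilon,p)$-regular and for each $i$ all but at most $\varepsilon|V_i|$ vertices of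 $V_i$ are $\varepsilon$-typical. An edge between $V_2$ and $V_3$ is $\varepsilon'$-good if its endpoints have at least $(1-\varepsilon')d_{12}d_{13}p^2|V_1|$ common neighbours in $V_1$. *)

theory Defs
  imports Complex_Main
begin

text \<open>A graph is a symmetric irreflexive relation E on the vertex type.
  e(X,Y) counts ordered pairs (x,y) with x in X, y in Y adjacent; for disjoint X, Y
  this is the number of edges between X and Y.\<close>

definition edges_between :: "('a \<Rightarrow> 'a \<Rightarrow> bool) \<Rightarrow> 'a set \<Rightarrow> 'a set \<Rightarrow> ('a \<times> 'a) set" where
  "edges_between E X Y = {(x, y). x \<in> X \<and> y \<in> Y \<and> E x y}"

definition e_count :: "('a \<Rightarrow> 'a \<Rightarrow> bool) \<Rightarrow> 'a set \<Rightarrow> 'a set \<Rightarrow> nat" where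
  "e_count E X Y = card (edges_between E X Y)"

definition dens :: "('a \<Rightarrow> 'a \<Rightarrow> bool) \<Rightarrow> 'a set \<Rightarrow> 'a set \<Rightarrow> real" where
  "dens E X Y = real (e_count E X Y) / (real (card X) * real (card Y))"

definition approx_eq :: "real \<Rightarrow> real \<Rightarrow> real \<Rightarrow> bool" where
  "approx_eq x a y \<longleftrightarrow> (1 - a) * y \<le> x \<and> x \<le> (1 + a) * y"

definition regular_pair :: "('a \<Rightarrow> 'a \<Rightarrow> bool) \<Rightarrow> real \<Rightarrow> real \<Rightarrow> 'a set \<Rightarrow> 'a set \<Rightarrow> bool" where
  "regular_pair E eps p X Y \<longleftrightarrow>
     (\<forall>X' Y'. X' \<subseteq> X \<and> Y' \<subseteq> Y \<and> real (card X') \<ge> eps * real (card X)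
        \<and> real (card Y') \<ge> eps * real (card Y)
        \<longrightarrow> \<bar>dens E X Y - dens E X' Y'\<bar> \<le> eps * p)"

definition regular_triple :: "('a \<Rightarrow> 'a \<Rightarrow> bool) \<Rightarrow> real \<Rightarrow> real \<Rightarrow> 'a set \<Rightarrow> 'a set \<Rightarrow> 'a set \<Rightarrow> bool" where
  "regular_triple E eps p V1 V2 V3 \<longleftrightarrow>
     regular_pair E eps p V1 V2 \<and> regular_pair E eps p V1 V3 \<and> regular_pair E eps p V2 V3"

definition nbhd :: "('a \<Rightarrow> 'a \<Rightarrow> bool) \<Rightarrow> 'a \<Rightarrow> 'a set \<Rightarrow> 'a set" where
  "nbhd E v X = {w \<in> X. E v w}"

text \<open>v in Vi is eps-typical w.r.t. the other two classes Vj, Vk. Note d_ij p = dens E Vi Vj.\<close>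
definition typical_vertex :: "('a \<Rightarrow> 'a \<Rightarrow> bool) \<Rightarrow> real \<Rightarrow> real \<Rightarrow> 'a set \<Rightarrow> 'a set \<Rightarrow> 'a set \<Rightarrow> 'a \<Rightarrow> bool" where
  "typical_vertex E eps p Vi Vj Vk v \<longleftrightarrow>
     approx_eq (real (card (nbhd E v Vj))) eps (dens E Vi Vj * real (card Vj)) \<and>
     approx_eq (real (card (nbhd E v Vk))) eps (dens E Vi Vk * real (card Vk)) \<and>
     (\<exists>Nj' Nk'. Nj' \<subseteq> nbhd E v Vj \<and> Nk' \<subseteq> nbhd E v Vk \<and>
        real (card Nj') \<ge> (1 - eps) * real (card (nbhd E v Vj)) \<and>
        real (card Nk') \<ge> (1 - eps) * real (card (nbhd E v Vk)) \<and>
        regular_pair E eps p Nj' Nk' \<and>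
        approx_eq (dens E Nj' Nk') eps (dens E Vj Vk))"

definition typical_triple :: "('a \<Rightarrow> 'a \<Rightarrow> bool) \<Rightarrow> real \<Rightarrow> real \<Rightarrow> 'a set \<Rightarrow> 'a set \<Rightarrow> 'a set \<Rightarrow> bool" where
  "typical_triple E eps p V1 V2 V3 \<longleftrightarrow>
     regular_triple E eps p V1 V2 V3 \<and>
     real (card {v \<in> V1. \<not> typical_vertex E eps p V1 V2 V3 v}) \<le> eps * real (card V1) \<and>
     real (card {v \<in> V2. \<not> typical_vertex E eps p V2 V1 V3 v}) \<le> eps * real (card V2) \<and>
     real (card {v \<in> V3. \<not> typical_vertex E eps p V3 V1 V2 v}) \<le> eps * real (card V3)"

definition good_edge :: "('a \<Rightarrow> 'a \<Rightarrow> bool) \<Rightarrow> real \<Rightarrow> 'a set \<Rightarrow> 'a set \<Rightarrow> 'a set \<Rightarrow> 'a \<Rightarrow> 'a \<Rightarrow> bool" where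
  "good_edge E eps' V1 V2 V3 u v \<longleftrightarrow>
     real (card {w \<in> V1. E u w \<and> E v w}) \<ge> (1 - eps') * dens E V1 V2 * dens E V1 V3 * real (card V1)"

end

theory Submission
  imports Defs
begin

text \<open>
  For a typical vertex u of V2 the trimmed neighbourhoods of u in V1 and V3 form a regular pair
  of density about d13 p, so all but an eps-fraction of them have about d13 p times d12 p |V1|
  neighbours in the V1 side, i.e. are joined to u by a good edge; hence at most 2 eps deg(u)
  non-good edges meet u, and likewise for typical vertices of V3. The atypical parts A2, A3 have
  at most eps |V2| and eps |V3| vertices, so by regularity of (V2, V3) at most 8 eps^2 e(V2, V3)
  edges join them. Counting non-good edges from V2, from V3 and from both sides gives three
  estimates: if few edges meet A2 or A3, one of the first two already gives 4 eps e(V2, V3);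
  otherwise the edges at A2 and A3 outweigh the 8 eps^2 e(V2, V3) term in the third.
\<close>

lemma card_pairs_eq_sum_fst:
  assumes "finite A" "finite B"
  shows "card {(x, y). x \<in> A \<and> y \<in> B \<and> R x y} = (\<Sum>x\<in>A. card {y \<in> B. R x y})"
proof -
  have "{(x, y). x \<in> A \<and> y \<in> B \<and> R x y} = (SIGMA x:A. {y \<in> B. R x y})" by auto
  then show ?thesis using assms by (simp add: card_SigmaI)
qed

lemma card_pairs_eq_sum_snd:
  assumes "finite A" "finite B"
  shows "card {(x, y). x \<in> A \<and> y \<in> B \<and> R x y} = (\<Sum>y\<in>B. card {x \<in> A. R x y})"
proof -
  have "{(x, y). x \<in> A \<and> y \<in> B \<and> R x y} = prod.swap ` {(y, x). y \<in> B \<and> x \<in> A \<and> R x y}"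
    by auto
  then show ?thesis using card_pairs_eq_sum_fst[OF assms(2,1)] by (simp add: card_image)
qed

lemma e_count_eq_sum_fst: "finite A \<Longrightarrow> finite B \<Longrightarrow> e_count E A B = (\<Sum>x\<in>A. card (nbhd E x B))"
  unfolding e_count_def edges_between_def nbhd_def by (rule card_pairs_eq_sum_fst)

lemma e_count_eq_sum_snd: "finite A \<Longrightarrow> finite B \<Longrightarrow> e_count E A B = (\<Sum>y\<in>B. card {x \<in> A. E x y})"
  unfolding e_count_def edges_between_def by (rule card_pairs_eq_sum_snd)

lemma e_count_commute:
  assumes sym: "\<And>x y. E x y \<Longrightarrow> E y x" and "finite A" "finite B"
  shows "e_count E A B = e_count E B A"
proof -
  have "nbhd E x B = {y \<in> B. E y x}" for x by (auto simp: nbhd_def dest: sym)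
  then show ?thesis
    using assms(2,3) by (simp add: e_count_eq_sum_fst[of A B] e_count_eq_sum_snd[of B A])
qed

lemma dens_commute:
  assumes "\<And>x y. E x y \<Longrightarrow> E y x" "finite A" "finite B"
  shows "dens E A B = dens E B A"
  unfolding dens_def using e_count_commute[OF assms] by (simp add: mult.commute)

lemma dens_nonneg: "0 \<le> dens E A B"
  unfolding dens_def by simp

lemma finite_edges_between: "finite A \<Longrightarrow> finite B \<Longrightarrow> finite (edges_between E A B)"
  unfolding edges_between_def by (rule finite_subset[of _ "A \<times> B"]) auto

lemma e_count_mono:
  "finite X \<Longrightarrow> finite Y \<Longrightarrow> A \<subseteq> X \<Longrightarrow> B \<subseteq> Y \<Longrightarrow> e_count E A B \<le> e_count E X Y"
  unfolding e_count_def
  by (rule card_mono[OF finite_edges_between]) (auto simp: edges_between_def)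

lemma e_count_eq_dens:
  assumes "finite A" "finite B"
  shows "real (e_count E A B) = dens E A B * real (card A) * real (card B)"
proof (cases "A = {} \<or> B = {}")
  case True
  then show ?thesis using assms by (auto simp: e_count_eq_sum_fst nbhd_def)
next
  case False
  then show ?thesis using assms by (simp add: dens_def)
qed

lemma e_count_split_fst:
  "finite X \<Longrightarrow> finite Y \<Longrightarrow> A \<subseteq> X \<Longrightarrow> e_count E X Y = e_count E (X - A) Y + e_count E A Y"
  by (simp add: e_count_eq_sum_fst finite_subset sum.subset_diff)

lemma e_count_split_snd:
  "finite X \<Longrightarrow> finite Y \<Longrightarrow> B \<subseteq> Y \<Longrightarrow> e_count E X Y = e_count E X (Y - B) + e_count E X B"
  by (simp add: e_count_eq_sum_snd finite_subset sum.subset_diff)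

lemma regular_pair_few_low_degree:
  assumes reg: "regular_pair E eps p X Y" and fin: "finite X" "finite Y"
    and eps: "0 < eps" "eps \<le> 1"
  shows "real (card {y \<in> Y. real (card {x \<in> X. E x y}) < (dens E X Y - eps * p) * real (card X)})
           \<le> eps * real (card Y)" (is "real (card ?S) \<le> _")
proof (rule ccontr)
  assume large: "\<not> real (card ?S) \<le> eps * real (card Y)"
  have finS: "finite ?S" using fin by simp
  have "?S \<noteq> {}" using large eps by (intro notI) simp
  have "eps * real (card X) \<le> real (card X)" using eps by (simp add: mult_left_le_one_le)
  then have "\<bar>dens E X Y - dens E X ?S\<bar> \<le> eps * p"
    using large by (intro reg[unfolded regular_pair_def, rule_format]) auto
  then have "(dens E X Y - eps * p) * real (card X) * real (card ?S) \<le> real (e_count E X ?S)"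
    using e_count_eq_dens[OF fin(1) finS, of E] by (simp add: mult_right_mono)
  also have "real (e_count E X ?S) = (\<Sum>y\<in>?S. real (card {x \<in> X. E x y}))"
    using fin by (simp add: e_count_eq_sum_snd)
  also have "\<dots> < (\<Sum>y\<in>?S. (dens E X Y - eps * p) * real (card X))"
    using finS \<open>?S \<noteq> {}\<close> by (intro sum_strict_mono) auto
  finally show False by (simp add: mult.commute)
qed

lemma exists_superset_card_between:
  assumes fin: "finite V" and A: "A \<subseteq> V" "A \<noteq> {}" "real (card A) \<le> eps * real (card V)"
    and eps: "eps \<le> 1"
  obtains X where "A \<subseteq> X" "X \<subseteq> V" "eps * real (card V) \<le> real (card X)"
    "real (card X) \<le> 2 * eps * real (card V)"
proof -
  define k where "k = nat \<lceil>eps * real (card V)\<rceil>"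
  have "card A \<ge> 1" using A fin by (simp add: Suc_le_eq card_gt_0_iff finite_subset)
  then have ge1: "1 \<le> eps * real (card V)" using A by linarith
  then have k: "eps * real (card V) \<le> real k" "real k \<le> eps * real (card V) + 1"
    unfolding k_def by linarith+
  have "card A \<le> k" using A k by linarith
  moreover have "k \<le> card V"
  proof -
    have "0 \<le> eps"
    proof (rule ccontr)
      assume "\<not> 0 \<le> eps"
      then have "eps * real (card V) \<le> 0" by (simp add: mult_nonpos_nonneg)
      then show False using ge1 by linarith
    qed
    then have "eps * real (card V) \<le> real (card V)" using eps by (simp add: mult_left_le_one_le)
    then show ?thesis unfolding k_def by (simp add: nat_le_iff ceiling_le_iff)
  qed
  ultimately obtain X where "A \<subseteq> X" "X \<subseteq> V" "card X = k"
    using exists_subset_between[OF _ _ A(1) fin] by blast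
  then show ?thesis using that k ge1 by simp
qed

lemma regular_pair_e_count_small_subsets:
  assumes reg: "regular_pair E eps p X Y" and fin: "finite X" "finite Y"
    and eps: "0 < eps" "eps \<le> 1" and p: "0 \<le> p"
    and A: "A \<subseteq> X" "real (card A) \<le> eps * real (card X)"
    and B: "B \<subseteq> Y" "real (card B) \<le> eps * real (card Y)"
  shows "real (e_count E A B) \<le> 4 * eps^2 * (dens E X Y + eps * p) * real (card X) * real (card Y)"
proof (cases "A = {} \<or> B = {}")
  case True
  then have "e_count E A B = 0" by (auto simp: e_count_def edges_between_def)
  then show ?thesis using eps p dens_nonneg[of E X Y] by simp
next
  case False
  obtain X' where X': "A \<subseteq> X'" "X' \<subseteq> X" "eps * real (card X) \<le> real (card X')"
    "real (card X') \<le> 2 * eps * real (card X)"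
    using exists_superset_card_between[OF fin(1) A(1) _ A(2) eps(2)] False by blast
  obtain Y' where Y': "B \<subseteq> Y'" "Y' \<subseteq> Y" "eps * real (card Y) \<le> real (card Y')"
    "real (card Y') \<le> 2 * eps * real (card Y)"
    using exists_superset_card_between[OF fin(2) B(1) _ B(2) eps(2)] False by blast
  have fin': "finite X'" "finite Y'" using X' Y' fin finite_subset by blast+
  have "\<bar>dens E X Y - dens E X' Y'\<bar> \<le> eps * p"
    using reg X' Y' unfolding regular_pair_def by blast
  then have "dens E X' Y' \<le> dens E X Y + eps * p" by linarith
  have "real (e_count E A B) \<le> real (e_count E X' Y')"
    using e_count_mono[OF fin' X'(1) Y'(1)] by simp
  also have "\<dots> = dens E X' Y' * real (card X') * real (card Y')"
    by (rule e_count_eq_dens[OF fin'])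
  also have "\<dots> \<le> (dens E X Y + eps * p) * (2 * eps * real (card X)) * (2 * eps * real (card Y))"
    using \<open>dens E X' Y' \<le> _\<close> X' Y' eps p dens_nonneg[of E X Y] dens_nonneg[of E X' Y']
    by (intro mult_mono) auto
  finally show ?thesis by (simp add: power2_eq_square algebra_simps)
qed

lemma regular_subset_few_low_degree:
  assumes reg: "regular_pair E eps p N K" and fin: "finite N" "finite K" "finite M"
    and eps: "0 < eps" "eps \<le> 1"
    and K: "K \<subseteq> M" "real (card K) \<ge> (1 - eps) * real (card M)"
    and S: "S \<subseteq> M"
      "\<And>y. y \<in> S \<Longrightarrow> y \<in> K \<Longrightarrow> real (card {w \<in> N. E w y}) < (dens E N K - eps * p) * real (card N)"
  shows "real (card S) \<le> 2 * eps * real (card M)"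
proof -
  define L where "L = {y \<in> K. real (card {w \<in> N. E w y}) < (dens E N K - eps * p) * real (card N)}"
  have "S \<subseteq> (M - K) \<union> L" using S by (auto simp: L_def)
  then have "card S \<le> card ((M - K) \<union> L)" using fin by (intro card_mono) (auto simp: L_def)
  also have "\<dots> \<le> card (M - K) + card L" by (rule card_Un_le)
  finally have "real (card S) \<le> real (card (M - K)) + real (card L)"
    by (simp only: of_nat_add[symmetric] of_nat_le_iff)
  moreover have "real (card (M - K)) \<le> eps * real (card M)"
    using K fin by (simp add: card_Diff_subset card_mono of_nat_diff algebra_simps)
  moreover have "real (card L) \<le> eps * real (card K)"
    unfolding L_def by (rule regular_pair_few_low_degree[OF reg fin(1,2) eps])
  moreover have "eps * real (card K) \<le> eps * real (card M)"
    using K fin eps by (simp add: card_mono)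
  ultimately show ?thesis by simp
qed

lemma common_neighbour_threshold_le:
  fixes eps p r \<theta> D d a b n n' :: real
  assumes d: "(1 - eps) * D \<le> d" and tol: "eps * p \<le> r * D" and r: "r \<le> 1 - eps"
    and \<theta>: "\<theta> \<le> (1 - eps - r) * (1 - eps)^2" and nonneg: "0 \<le> a" "0 \<le> b" "0 \<le> D"
    and n: "(1 - eps) * (a * b) \<le> n" "(1 - eps) * n \<le> n'" and eps: "eps \<le> 1"
  shows "\<theta> * a * D * b \<le> (d - eps * p) * n'"
proof -
  have d_lower: "(1 - eps - r) * D \<le> d - eps * p" using d tol by (simp add: algebra_simps)
  have "0 \<le> (1 - eps - r) * D" using r nonneg by simp
  moreover have "(1 - eps)^2 * (a * b) \<le> n'"
  proof -
    have "(1 - eps) * ((1 - eps) * (a * b)) \<le> (1 - eps) * n" using n(1) eps by (simp add: mult_left_mono)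
    then show ?thesis using n(2) by (simp add: power2_eq_square mult.assoc)
  qed
  ultimately have "((1 - eps - r) * D) * ((1 - eps)^2 * (a * b)) \<le> (d - eps * p) * n'"
    using d_lower nonneg by (intro mult_mono) auto
  moreover have "\<theta> * (D * (a * b)) \<le> ((1 - eps - r) * (1 - eps)^2) * (D * (a * b))"
    using \<theta> nonneg by (intro mult_right_mono) auto
  ultimately show ?thesis by (simp add: algebra_simps)
qed

lemma typical_vertex_few_bad_neighbours:
  assumes sym: "\<And>x y. E x y \<Longrightarrow> E y x"
    and fin: "finite Vj" "finite Vk"
    and eps: "0 < eps" "eps \<le> 1"
    and typical: "typical_vertex E eps p Vi Vj Vk x"
    and tol: "eps * p \<le> r * dens E Vj Vk" and r: "r \<le> 1 - eps"
    and \<theta>: "\<theta> \<le> (1 - eps - r) * (1 - eps)^2"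
  shows "real (card {y \<in> Vk. E x y \<and>
             real (card {w \<in> Vj. E x w \<and> E y w}) < \<theta> * dens E Vi Vj * dens E Vj Vk * real (card Vj)})
         \<le> 2 * eps * real (card (nbhd E x Vk))" (is "real (card ?S) \<le> _")
proof -
  define N where "N = nbhd E x Vj"
  define M where "M = nbhd E x Vk"
  define D where "D = dens E Vj Vk"
  from typical obtain Nj' Nk' where
    aN: "approx_eq (real (card N)) eps (dens E Vi Vj * real (card Vj))" and
    sub: "Nj' \<subseteq> N" "Nk' \<subseteq> M" and
    cNj': "real (card Nj') \<ge> (1 - eps) * real (card N)" and
    cNk': "real (card Nk') \<ge> (1 - eps) * real (card M)" and
    reg: "regular_pair E eps p Nj' Nk'" and
    aD: "approx_eq (dens E Nj' Nk') eps D"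
    unfolding typical_vertex_def N_def M_def D_def by blast
  have finNM: "finite N" "finite M" using fin by (auto simp: N_def M_def nbhd_def)
  have fin': "finite Nj'" "finite Nk'" using finNM sub finite_subset by blast+
  define thr where "thr = (dens E Nj' Nk' - eps * p) * real (card Nj')"
  have thr: "\<theta> * dens E Vi Vj * D * real (card Vj) \<le> thr"
    unfolding thr_def D_def
    by (rule common_neighbour_threshold_le[OF _ tol r \<theta> dens_nonneg _ dens_nonneg _ cNj' eps(2)])
      (use aD aN in \<open>simp_all add: approx_eq_def D_def\<close>)
  have "y \<in> M" if "y \<in> ?S" for y using that by (auto simp: M_def nbhd_def)
  moreover have "real (card {w \<in> Nj'. E w y}) < (dens E Nj' Nk' - eps * p) * real (card Nj')"
    if "y \<in> ?S" for y
  proof -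
    have "card {w \<in> Nj'. E w y} \<le> card {w \<in> Vj. E x w \<and> E y w}"
      using sub fin by (intro card_mono) (auto simp: N_def nbhd_def dest: sym)
    then show ?thesis using that thr by (simp add: D_def thr_def)
  qed
  ultimately show ?thesis
    using regular_subset_few_low_degree[OF reg fin' finNM(2) eps sub(2) cNk', of ?S]
    by (auto simp: M_def)
qed

lemma good_edge_failures_at_typical_vertex_fst:
  assumes sym: "\<And>x y. E x y \<Longrightarrow> E y x" and fin: "finite V1" "finite V2" "finite V3"
    and eps: "0 < eps" "eps \<le> 1"
    and typical: "typical_vertex E eps p V2 V1 V3 u"
    and tol: "eps * p \<le> r * dens E V1 V3" and r: "r \<le> 1 - eps"
    and eps': "1 - eps' \<le> (1 - eps - r) * (1 - eps)^2"
  shows "real (card {v \<in> V3. E u v \<and> \<not> good_edge E eps' V1 V2 V3 u v})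
           \<le> 2 * eps * real (card (nbhd E u V3))"
proof -
  have "{v \<in> V3. E u v \<and> \<not> good_edge E eps' V1 V2 V3 u v}
      = {v \<in> V3. E u v \<and> real (card {w \<in> V1. E u w \<and> E v w})
           < (1 - eps') * dens E V2 V1 * dens E V1 V3 * real (card V1)}"
    using dens_commute[OF sym fin(1,2)] by (auto simp: good_edge_def not_le)
  then show ?thesis
    using typical_vertex_few_bad_neighbours[OF sym fin(1,3) eps typical tol r eps'] by simp
qed

lemma good_edge_failures_at_typical_vertex_snd:
  assumes sym: "\<And>x y. E x y \<Longrightarrow> E y x" and fin: "finite V1" "finite V2" "finite V3"
    and eps: "0 < eps" "eps \<le> 1"
    and typical: "typical_vertex E eps p V3 V1 V2 v"
    and tol: "eps * p \<le> r * dens E V1 V2" and r: "r \<le> 1 - eps"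
    and eps': "1 - eps' \<le> (1 - eps - r) * (1 - eps)^2"
  shows "real (card {u \<in> V2. E u v \<and> \<not> good_edge E eps' V1 V2 V3 u v})
           \<le> 2 * eps * real (card {u \<in> V2. E u v})"
proof -
  have "{u \<in> V2. E u v \<and> \<not> good_edge E eps' V1 V2 V3 u v}
      = {u \<in> V2. E v u \<and> real (card {w \<in> V1. E v w \<and> E u w})
           < (1 - eps') * dens E V3 V1 * dens E V1 V2 * real (card V1)}"
    using dens_commute[OF sym fin(1,3)]
    by (auto simp: good_edge_def not_le conj_commute mult.commute mult.left_commute dest: sym)
  moreover have "nbhd E v V2 = {u \<in> V2. E u v}" by (auto simp: nbhd_def dest: sym)
  ultimately show ?thesis
    using typical_vertex_few_bad_neighbours[OF sym fin(1,2) eps typical tol r eps'] by simp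
qed

lemma card_edges_le_by_degree_fst:
  assumes fin: "finite A" "finite B"
    and deg: "\<And>x. x \<in> A \<Longrightarrow> real (card {y \<in> B. E x y \<and> Q x y}) \<le> c * real (card (nbhd E x B))"
  shows "real (card {(x, y) \<in> edges_between E A B. Q x y}) \<le> c * real (e_count E A B)"
proof -
  have "{(x, y) \<in> edges_between E A B. Q x y} = {(x, y). x \<in> A \<and> y \<in> B \<and> (E x y \<and> Q x y)}"
    by (auto simp: edges_between_def)
  then have "real (card {(x, y) \<in> edges_between E A B. Q x y})
      = (\<Sum>x\<in>A. real (card {y \<in> B. E x y \<and> Q x y}))"
    using card_pairs_eq_sum_fst[OF fin] by simp
  also have "\<dots> \<le> (\<Sum>x\<in>A. c * real (card (nbhd E x B)))" by (rule sum_mono) (rule deg)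
  also have "\<dots> = c * real (e_count E A B)" using fin by (simp add: e_count_eq_sum_fst sum_distrib_left)
  finally show ?thesis .
qed

lemma card_edges_le_by_degree_snd:
  assumes fin: "finite A" "finite B"
    and deg: "\<And>y. y \<in> B \<Longrightarrow> real (card {x \<in> A. E x y \<and> Q x y}) \<le> c * real (card {x \<in> A. E x y})"
  shows "real (card {(x, y) \<in> edges_between E A B. Q x y}) \<le> c * real (e_count E A B)"
proof -
  have "{(x, y) \<in> edges_between E A B. Q x y} = {(x, y). x \<in> A \<and> y \<in> B \<and> (E x y \<and> Q x y)}"
    by (auto simp: edges_between_def)
  then have "real (card {(x, y) \<in> edges_between E A B. Q x y})
      = (\<Sum>y\<in>B. real (card {x \<in> A. E x y \<and> Q x y}))"
    using card_pairs_eq_sum_snd[OF fin] by simp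
  also have "\<dots> \<le> (\<Sum>y\<in>B. c * real (card {x \<in> A. E x y}))" by (rule sum_mono) (rule deg)
  also have "\<dots> = c * real (e_count E A B)" using fin by (simp add: e_count_eq_sum_snd sum_distrib_left)
  finally show ?thesis .
qed

lemma card_edges_three_bounds:
  fixes E Q :: "'a \<Rightarrow> 'a \<Rightarrow> bool" and X Y AX AY :: "'a set" and c :: real
  defines "F \<equiv> {(x, y) \<in> edges_between E X Y. Q x y}"
  assumes fin: "finite X" "finite Y" and sub: "AX \<subseteq> X" "AY \<subseteq> Y"
    and degX: "\<And>x. x \<in> X - AX \<Longrightarrow> real (card {y \<in> Y. E x y \<and> Q x y}) \<le> c * real (card (nbhd E x Y))"
    and degY: "\<And>y. y \<in> Y - AY \<Longrightarrow> real (card {x \<in> X. E x y \<and> Q x y}) \<le> c * real (card {x \<in> X. E x y})"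
  shows "real (card F) \<le> c * real (e_count E (X - AX) Y) + real (e_count E AX Y)"
    and "real (card F) \<le> c * real (e_count E X (Y - AY)) + real (e_count E X AY)"
    and "real (card F) \<le> c * real (e_count E (X - AX) Y) + c * real (e_count E X (Y - AY))
                           + real (e_count E AX AY)"
proof -
  define F1 where "F1 = {(x, y) \<in> edges_between E (X - AX) Y. Q x y}"
  define F2 where "F2 = {(x, y) \<in> edges_between E X (Y - AY). Q x y}"
  have finAXY: "finite AX" "finite AY" using fin sub finite_subset by blast+
  have F1: "real (card F1) \<le> c * real (e_count E (X - AX) Y)"
    unfolding F1_def using fin degX by (intro card_edges_le_by_degree_fst) auto
  have F2: "real (card F2) \<le> c * real (e_count E X (Y - AY))"
    unfolding F2_def using fin degY by (intro card_edges_le_by_degree_snd) auto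
  have cover: "card S \<le> card T + card U" if "S \<subseteq> T \<union> U" "finite T" "finite U"
    for S T U :: "('a \<times> 'a) set"
    using that card_mono[of "T \<union> U" S] card_Un_le[of T U] by simp
  have "finite F1" unfolding F1_def
    by (rule finite_subset[OF _ finite_edges_between[of "X - AX" Y E]]) (use fin in auto)
  moreover have "finite F2" unfolding F2_def
    by (rule finite_subset[OF _ finite_edges_between[of X "Y - AY" E]]) (use fin in auto)
  ultimately have finF12: "finite F1" "finite F2" .
  have covers: "F \<subseteq> F1 \<union> edges_between E AX Y" "F \<subseteq> F2 \<union> edges_between E X AY"
    "F \<subseteq> (F1 \<union> F2) \<union> edges_between E AX AY"
    by (auto simp: F_def F1_def F2_def edges_between_def)
  have "card F \<le> card F1 + e_count E AX Y"
    unfolding e_count_def by (rule cover[OF covers(1) finF12(1) finite_edges_between[OF finAXY(1) fin(2)]])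
  then have "real (card F) \<le> real (card F1) + real (e_count E AX Y)"
    by (simp only: of_nat_add[symmetric] of_nat_le_iff)
  then show "real (card F) \<le> c * real (e_count E (X - AX) Y) + real (e_count E AX Y)"
    using F1 by linarith
  have "card F \<le> card F2 + e_count E X AY"
    unfolding e_count_def by (rule cover[OF covers(2) finF12(2) finite_edges_between[OF fin(1) finAXY(2)]])
  then have "real (card F) \<le> real (card F2) + real (e_count E X AY)"
    by (simp only: of_nat_add[symmetric] of_nat_le_iff)
  then show "real (card F) \<le> c * real (e_count E X (Y - AY)) + real (e_count E X AY)"
    using F2 by linarith
  have "card F \<le> card (F1 \<union> F2) + e_count E AX AY"
    unfolding e_count_def using covers(3) finF12 finAXY by (intro cover finite_edges_between) auto
  then have "card F \<le> card F1 + card F2 + e_count E AX AY" using card_Un_le[of F1 F2] by linarith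
  then have "real (card F) \<le> real (card F1) + real (card F2) + real (e_count E AX AY)"
    by (simp only: of_nat_add[symmetric] of_nat_le_iff)
  then show "real (card F) \<le> c * real (e_count E (X - AX) Y) + c * real (e_count E X (Y - AY))
                           + real (e_count E AX AY)"
    using F1 F2 by linarith
qed

lemma le_of_three_edge_bounds:
  fixes B a b P Q K e eps :: real
  assumes split: "a + P = e" "b + Q = e"
    and bounds: "B \<le> 2 * eps * a + P" "B \<le> 2 * eps * b + Q" "B \<le> 2 * eps * a + 2 * eps * b + K"
    and K: "K \<le> 8 * eps^2 * e" and eps: "0 < eps" "2 * eps < 1" and e: "0 \<le> e"
  shows "B \<le> 4 * eps * e"
proof -
  have viaP: "B \<le> 2 * eps * e + (1 - 2 * eps) * P"
    using bounds(1) by (simp add: split(1)[symmetric] algebra_simps)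
  have viaQ: "B \<le> 2 * eps * e + (1 - 2 * eps) * Q"
    using bounds(2) by (simp add: split(2)[symmetric] algebra_simps)
  show ?thesis
  proof (cases "(1 - 2 * eps) * P \<le> 2 * eps * e \<or> (1 - 2 * eps) * Q \<le> 2 * eps * e")
    case True
    then show ?thesis using viaP viaQ by linarith
  next
    case False
    then have PQ: "2 * eps * e < (1 - 2 * eps) * P" "2 * eps * e < (1 - 2 * eps) * Q" by auto
    have "0 \<le> 2 * eps * e" using eps e by simp
    then have "0 < (1 - 2 * eps) * P" "0 < (1 - 2 * eps) * Q" using PQ by linarith+
    then have "0 \<le> P" "0 \<le> Q" using eps by (simp_all add: zero_less_mult_iff)
    have "8 * eps^2 * e = 2 * eps * (2 * eps * e + 2 * eps * e)" by (simp add: power2_eq_square)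
    also have "\<dots> \<le> 2 * eps * ((1 - 2 * eps) * P + (1 - 2 * eps) * Q)"
      using PQ eps by (intro mult_left_mono) linarith+
    also have "\<dots> \<le> 2 * eps * (P + Q)"
      using \<open>0 \<le> P\<close> \<open>0 \<le> Q\<close> eps by (intro mult_left_mono) (auto simp: algebra_simps)
    finally have "K \<le> 2 * eps * P + 2 * eps * Q" using K by (simp add: distrib_left)
    moreover have "2 * eps * a = 2 * eps * e - 2 * eps * P"
      by (simp add: split(1)[symmetric] algebra_simps)
    moreover have "2 * eps * b = 2 * eps * e - 2 * eps * Q"
      by (simp add: split(2)[symmetric] algebra_simps)
    ultimately show ?thesis using bounds(3) by linarith
  qed
qed

lemma typical_triple_card_non_good_edges:
  assumes sym: "\<And>x y. E x y \<Longrightarrow> E y x" and fin: "finite V1" "finite V2" "finite V3"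
    and eps: "0 < eps" and p: "0 \<le> p" and r: "0 \<le> r" "r + 3 * eps < 1"
    and eps': "1 - eps' \<le> (1 - eps - r) * (1 - eps)^2"
    and typical: "typical_triple E eps p V1 V2 V3"
    and tol: "eps * p \<le> r * dens E V1 V2" "eps * p \<le> r * dens E V1 V3" "eps * p \<le> r * dens E V2 V3"
  shows "real (card {(u, v) \<in> edges_between E V2 V3. \<not> good_edge E eps' V1 V2 V3 u v})
           \<le> 4 * eps * dens E V2 V3 * real (card V2) * real (card V3)"
proof -
  define A2 where "A2 = {u \<in> V2. \<not> typical_vertex E eps p V2 V1 V3 u}"
  define A3 where "A3 = {v \<in> V3. \<not> typical_vertex E eps p V3 V1 V2 v}"
  have eps1: "0 < eps" "eps \<le> 1" "r \<le> 1 - eps" using eps r by auto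
  have sub: "A2 \<subseteq> V2" "A3 \<subseteq> V3" by (auto simp: A2_def A3_def)
  have degV2: "real (card {v \<in> V3. E u v \<and> \<not> good_edge E eps' V1 V2 V3 u v})
      \<le> 2 * eps * real (card (nbhd E u V3))" if "u \<in> V2 - A2" for u
    using that tol(2)
    by (intro good_edge_failures_at_typical_vertex_fst[OF sym fin eps1(1,2) _ _ eps1(3) eps'])
      (auto simp: A2_def)
  have degV3: "real (card {u \<in> V2. E u v \<and> \<not> good_edge E eps' V1 V2 V3 u v})
      \<le> 2 * eps * real (card {u \<in> V2. E u v})" if "v \<in> V3 - A3" for v
    using that tol(1)
    by (intro good_edge_failures_at_typical_vertex_snd[OF sym fin eps1(1,2) _ _ eps1(3) eps'])
      (auto simp: A3_def)
  note bounds = card_edges_three_bounds[OF fin(2,3) sub degV2 degV3]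
  have K: "real (e_count E A2 A3) \<le> 8 * eps^2 * real (e_count E V2 V3)"
  proof -
    have "real (e_count E A2 A3)
        \<le> 4 * eps^2 * (dens E V2 V3 + eps * p) * real (card V2) * real (card V3)"
      using typical eps1 p
      by (intro regular_pair_e_count_small_subsets[OF _ fin(2,3)])
        (auto simp: typical_triple_def regular_triple_def A2_def A3_def)
    also have "\<dots> \<le> 4 * eps^2 * (2 * dens E V2 V3) * real (card V2) * real (card V3)"
      using tol(3) r eps1 dens_nonneg[of E V2 V3] mult_right_mono[of r 1 "dens E V2 V3"]
      by (intro mult_right_mono mult_left_mono) auto
    finally show ?thesis by (simp add: e_count_eq_dens[OF fin(2,3)])
  qed
  have "real (card {(u, v) \<in> edges_between E V2 V3. \<not> good_edge E eps' V1 V2 V3 u v})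
      \<le> 4 * eps * real (e_count E V2 V3)"
  proof (rule le_of_three_edge_bounds[OF _ _ bounds K eps])
    show "real (e_count E (V2 - A2) V3) + real (e_count E A2 V3) = real (e_count E V2 V3)"
      using e_count_split_fst[OF fin(2,3) sub(1)] by simp
    show "real (e_count E V2 (V3 - A3)) + real (e_count E V2 A3) = real (e_count E V2 V3)"
      using e_count_split_snd[OF fin(2,3) sub(2)] by simp
  qed (use eps r in auto)
  then show ?thesis by (simp add: e_count_eq_dens[OF fin(2,3)] mult.assoc)
qed

theorem proposition2p12:
  fixes E :: "'a \<Rightarrow> 'a \<Rightarrow> bool" and V1 V2 V3 :: "'a set"
    and eps eps' \<delta> p :: real
  assumes sym: "\<And>x y. E x y \<Longrightarrow> E y x"
    and irrefl: "\<And>x. \<not> E x x"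
    and fin: "finite V1" "finite V2" "finite V3"
    and disj: "V1 \<inter> V2 = {}" "V1 \<inter> V3 = {}" "V2 \<inter> V3 = {}"
    and pos: "eps > 0" "eps' > 0" "\<delta> > 0" "p > 0"
    and hconst: "3 * eps + eps / \<delta> \<le> eps'"
    and htyp: "typical_triple E eps p V1 V2 V3"
    and d12: "dens E V1 V2 \<ge> \<delta> * p"
    and d13: "dens E V1 V3 \<ge> \<delta> * p"
    and d23: "dens E V2 V3 \<ge> \<delta> * p"
  shows "real (card {(u, v) \<in> edges_between E V2 V3. \<not> good_edge E eps' V1 V2 V3 u v})
           \<le> 4 * eps * dens E V2 V3 * real (card V2) * real (card V3)"
proof (cases "eps' < 1")
  case False
  then have "(1 - eps') * (dens E V1 V2 * dens E V1 V3 * real (card V1)) \<le> 0"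
    using dens_nonneg[of E V1 V2] dens_nonneg[of E V1 V3] by (simp add: mult_nonpos_nonneg)
  then have "good_edge E eps' V1 V2 V3 u v" for u v
    unfolding good_edge_def by (simp add: mult.assoc order_trans)
  then show ?thesis using pos dens_nonneg[of E V2 V3] by simp
next
  case True
  define r where "r = eps / \<delta>"
  have r: "0 \<le> r" "r + 3 * eps < 1" using pos hconst True by (simp_all add: r_def)
  have tol: "eps * p \<le> r * d" if "\<delta> * p \<le> d" for d
    using mult_left_mono[OF that r(1)] pos by (simp add: r_def)
  have "(1 - eps - r) * (1 - eps)^2 = (1 - 3 * eps - r) + 2 * eps * (eps + r) + eps^2 * (1 - eps - r)"
    by (simp add: power2_eq_square algebra_simps)
  moreover have "0 \<le> 2 * eps * (eps + r)" "0 \<le> eps^2 * (1 - eps - r)" using pos r by auto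
  moreover have "1 - eps' \<le> 1 - 3 * eps - r" using hconst by (simp add: r_def)
  ultimately have eps': "1 - eps' \<le> (1 - eps - r) * (1 - eps)^2" by linarith
  show ?thesis
    by (rule typical_triple_card_non_good_edges[OF sym fin pos(1) less_imp_le[OF pos(4)] r eps' htyp
        tol[OF d12] tol[OF d13] tol[OF d23]])
qed

end
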